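(* For every integer $c\ge 1$, the functor $G\mapsto G/\Gamma_{c+1}(G)$ on groups is conditionally flat. In other words, if $1\to K\to G\to Q\to 1$ is an extension such that $1\to K/\Gamma_{c+1}K\to G/\Gamma_{c+1}G\to Q/\Gamma_{c+1}Q\to 1$ is again a short exact sequence, then for every homomorphism $X\to Q$ the pullback extension $1\to K\to G\times_Q X\to X\to 1$ has the same property.
   Context: The lower central series of a group $G$ is $\Gamma_1(G)=G$, $\Gamma_{i+1}(G)=[\Gamma_i(G),G]$; so $G/\Gamma_{c+1}(G)$ is the largest quotient of $G$ that is nilpotent of class at most $c$ (for $c=1$ this is the abelianization). A functor $L$ on groups is conditionally flat if for every extension $1\to N\to E\to Q\to 1$ such that $1\to LN\to LE\to LQ\to 1$ is short exact, and every homomorphism $Q'\to Q$, the pullback extension $1\to N\to E\times_Q Q'\to Q'\to 1$ also becomes short exact after applying $L$. *)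

theory Defs
  imports "HOL-Algebra.Algebra"
begin

text \<open>Lower central series, indexed as in the paper: lcs G 1 = carrier G,
  lcs G (i+1) = [lcs G i, G] (subgroup generated by the commutators).
  We set lcs G 0 = carrier G as a harmless convention.\<close>
fun lcs :: "('a, 'm) monoid_scheme \<Rightarrow> nat \<Rightarrow> 'a set" where
  "lcs G 0 = carrier G"
| "lcs G (Suc 0) = carrier G"
| "lcs G (Suc (Suc i)) = generate G
     {x \<otimes>\<^bsub>G\<^esub> y \<otimes>\<^bsub>G\<^esub> inv\<^bsub>G\<^esub> x \<otimes>\<^bsub>G\<^esub> inv\<^bsub>G\<^esub> y | x y.
        x \<in> lcs G (Suc i) \<and> y \<in> carrier G}"

definition nilq :: "nat \<Rightarrow> ('a, 'm) monoid_scheme \<Rightarrow> 'a set monoid" where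
  "nilq c G = G Mod (lcs G (Suc c))"

definition nilq_map :: "nat \<Rightarrow> ('a, 'm) monoid_scheme \<Rightarrow> ('b, 'n) monoid_scheme
    \<Rightarrow> ('a \<Rightarrow> 'b) \<Rightarrow> 'a set \<Rightarrow> 'b set" where
  "nilq_map c G H f = (\<lambda>C. \<Union>x\<in>C. lcs H (Suc c) #>\<^bsub>H\<^esub> f x)"

definition short_exact ::
  "('a, 'm) monoid_scheme \<Rightarrow> ('b, 'n) monoid_scheme \<Rightarrow> ('c, 'o) monoid_scheme
    \<Rightarrow> ('a \<Rightarrow> 'b) \<Rightarrow> ('b \<Rightarrow> 'c) \<Rightarrow> bool" where
  "short_exact N E Q \<iota> p \<longleftrightarrow> group N \<and> group E \<and> group Q \<and>
     \<iota> \<in> mon N E \<and> p \<in> epi E Q \<and> \<iota> ` carrier N = kernel E Q p"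

definition pullback ::
  "('b, 'n) monoid_scheme \<Rightarrow> ('d, 'p) monoid_scheme \<Rightarrow> ('b \<Rightarrow> 'c) \<Rightarrow> ('d \<Rightarrow> 'c)
    \<Rightarrow> ('b \<times> 'd) monoid" where
  "pullback E Y p f = (DirProd E Y)\<lparr>carrier := {(e, x). e \<in> carrier E \<and> x \<in> carrier Y \<and> p e = f x}\<rparr>"

end

theory Submission
  imports Defs
begin

text \<open>A surjective homomorphism \<open>G \<rightarrow> H\<close> maps \<open>\<Gamma>\<^sub>k(G)\<close> onto \<open>\<Gamma>\<^sub>k(H)\<close>, so the functor
  \<open>L\<^sub>c = G \<mapsto> G/\<Gamma>\<^sub>c\<^sub>+\<^sub>1(G)\<close> is right exact: it turns an exact sequence \<open>N \<rightarrow> G \<rightarrow> H \<rightarrow> 1\<close>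
  into an exact sequence. The pullback of a short exact sequence along \<open>Y \<rightarrow> Q\<close> is again short
  exact, so after applying \<open>L\<^sub>c\<close> only injectivity of \<open>L\<^sub>c N \<rightarrow> L\<^sub>c(E \<times>\<^sub>Q Y)\<close> is in question.
  Composed with \<open>L\<^sub>c\<close> of the projection to \<open>E\<close>, this map becomes the map \<open>L\<^sub>c N \<rightarrow> L\<^sub>c E\<close>,
  which is injective by hypothesis.\<close>

definition commutator_set :: "('a, 'm) monoid_scheme \<Rightarrow> 'a set \<Rightarrow> 'a set \<Rightarrow> 'a set" where
  "commutator_set G A B =
     {x \<otimes>\<^bsub>G\<^esub> y \<otimes>\<^bsub>G\<^esub> inv\<^bsub>G\<^esub> x \<otimes>\<^bsub>G\<^esub> inv\<^bsub>G\<^esub> y | x y. x \<in> A \<and> y \<in> B}"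

lemma lcs_Suc_Suc:
  "lcs G (Suc (Suc k)) = generate G (commutator_set G (lcs G (Suc k)) (carrier G))"
  by (simp add: commutator_set_def)

lemma commutator_set_mono:
  "A \<subseteq> A' \<Longrightarrow> B \<subseteq> B' \<Longrightarrow> commutator_set G A B \<subseteq> commutator_set G A' B'"
  unfolding commutator_set_def by blast

lemma (in group) commutator_set_in_carrier:
  "A \<subseteq> carrier G \<Longrightarrow> B \<subseteq> carrier G \<Longrightarrow> commutator_set G A B \<subseteq> carrier G"
  unfolding commutator_set_def by blast

lemma (in group_hom) commutator_set_img:
  assumes "A \<subseteq> carrier G" "B \<subseteq> carrier G"
  shows "commutator_set H (h ` A) (h ` B) = h ` commutator_set G A B"
proof -
  have "h (x \<otimes> y \<otimes> inv x \<otimes> inv y) = h x \<otimes>\<^bsub>H\<^esub> h y \<otimes>\<^bsub>H\<^esub> inv\<^bsub>H\<^esub> h x \<otimes>\<^bsub>H\<^esub> inv\<^bsub>H\<^esub> h y"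
    if "x \<in> A" "y \<in> B" for x y
    using that assms by (simp add: subset_iff)
  then show ?thesis
    unfolding commutator_set_def by (auto simp: image_iff) metis+
qed

lemma (in group) conjugation_group_hom:
  assumes "g \<in> carrier G" shows "group_hom G G (\<lambda>x. g \<otimes> x \<otimes> inv g)"
proof -
  have "g \<otimes> (x \<otimes> y) \<otimes> inv g = g \<otimes> x \<otimes> inv g \<otimes> (g \<otimes> y \<otimes> inv g)"
    if "x \<in> carrier G" "y \<in> carrier G" for x y
    using that assms by (simp add: m_assoc) (simp add: m_assoc[symmetric])
  then show ?thesis
    using assms by unfold_locales (auto intro!: homI)
qed

lemma (in group) lcs_Suc_normal: "lcs G (Suc k) \<lhd> G"
proof (induction k)
  case 0
  show ?case by (simp add: normal_self)
next
  case (Suc k)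
  then interpret \<Gamma>: normal "lcs G (Suc k)" G .
  let ?S = "commutator_set G (lcs G (Suc k)) (carrier G)"
  have S_carrier: "?S \<subseteq> carrier G"
    using commutator_set_in_carrier \<Gamma>.subset by blast
  have "g \<otimes> s \<otimes> inv g \<in> ?S" if "s \<in> ?S" "g \<in> carrier G" for s g
  proof -
    let ?conj = "\<lambda>x. g \<otimes> x \<otimes> inv g"
    interpret conj: group_hom G G ?conj using conjugation_group_hom \<open>g \<in> carrier G\<close> .
    have "?conj ` ?S = commutator_set G (?conj ` lcs G (Suc k)) (?conj ` carrier G)"
      using conj.commutator_set_img[OF \<Gamma>.subset subset_refl] by simp
    also have "\<dots> \<subseteq> ?S"
      using \<Gamma>.inv_op_closed2 \<open>g \<in> carrier G\<close> by (intro commutator_set_mono) auto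
    finally show ?thesis using \<open>s \<in> ?S\<close> by blast
  qed
  then show ?case
    unfolding lcs_Suc_Suc by (rule normal_generateI[OF S_carrier])
qed

lemma (in group) lcs_normal: "lcs G k \<lhd> G"
  using lcs_Suc_normal[of 0] lcs_Suc_normal by (cases k) simp_all

lemma (in group) lcs_subgroup: "subgroup (lcs G k) G"
  using lcs_normal normal_imp_subgroup by blast

lemma (in group_hom) lcs_img_subset: "h ` lcs G (Suc k) \<subseteq> lcs H (Suc k)"
proof (induction k)
  case 0
  show ?case by auto
next
  case (Suc k)
  have "h ` lcs G (Suc (Suc k)) = generate H (commutator_set H (h ` lcs G (Suc k)) (h ` carrier G))"
    unfolding lcs_Suc_Suc using G.lcs_subgroup[THEN subgroup.subset]
    by (simp del: lcs.simps add: commutator_set_img[symmetric] generate_img[symmetric] G.commutator_set_in_carrier)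
  also have "\<dots> \<subseteq> lcs H (Suc (Suc k))"
    unfolding lcs_Suc_Suc
    using Suc.IH by (intro H.mono_generate commutator_set_mono) auto
  finally show ?case .
qed

lemma (in group_hom) lcs_img_surj:
  assumes "h ` carrier G = carrier H" shows "h ` lcs G (Suc k) = lcs H (Suc k)"
proof (induction k)
  case 0
  show ?case using assms by simp
next
  case (Suc k)
  show ?case
    unfolding lcs_Suc_Suc using G.lcs_subgroup[THEN subgroup.subset] Suc.IH assms
    by (simp del: lcs.simps add: commutator_set_img[symmetric] generate_img[symmetric] G.commutator_set_in_carrier)
qed

lemma nilq_carrier: "carrier (nilq c G) = (\<lambda>x. lcs G (Suc c) #>\<^bsub>G\<^esub> x) ` carrier G"
  unfolding nilq_def by (simp add: carrier_FactGroup)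

lemma nilq_one: "\<one>\<^bsub>nilq c G\<^esub> = lcs G (Suc c)"
  unfolding nilq_def by simp

lemma (in group) nilq_group: "group (nilq c G)"
  unfolding nilq_def using lcs_normal normal.factorgroup_is_group by blast

lemma (in group) nilq_mult:
  assumes "x \<in> carrier G" "y \<in> carrier G"
  shows "(lcs G (Suc c) #> x) \<otimes>\<^bsub>nilq c G\<^esub> (lcs G (Suc c) #> y) = lcs G (Suc c) #> (x \<otimes> y)"
  unfolding nilq_def using normal.rcos_sum[OF lcs_normal] assms by simp

lemma (in group_hom) nilq_map_coset:
  assumes "g \<in> carrier G"
  shows "nilq_map c G H h (lcs G (Suc c) #> g) = lcs H (Suc c) #>\<^bsub>H\<^esub> h g"
proof -
  let ?\<Gamma>G = "lcs G (Suc c)" and ?\<Gamma>H = "lcs H (Suc c)"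
  have "?\<Gamma>H #>\<^bsub>H\<^esub> h x = ?\<Gamma>H #>\<^bsub>H\<^esub> h g" if x: "x \<in> ?\<Gamma>G #> g" for x
  proof -
    obtain a where a: "a \<in> ?\<Gamma>G" "x = a \<otimes> g"
      using x unfolding r_coset_def by blast
    have "a \<in> carrier G"
      using a(1) G.lcs_subgroup subgroup.subset by blast
    then have "h x = h a \<otimes>\<^bsub>H\<^esub> h g"
      using a(2) assms by simp
    moreover have "h a \<in> ?\<Gamma>H"
      using a(1) lcs_img_subset by blast
    ultimately have "h x \<in> ?\<Gamma>H #>\<^bsub>H\<^esub> h g"
      using H.lcs_subgroup[THEN subgroup.subset] assms by (simp add: H.rcosI)
    then show ?thesis
      using H.repr_independence H.lcs_subgroup assms by (metis hom_closed)
  qed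
  moreover have "?\<Gamma>G #> g \<noteq> {}"
    using G.rcos_self[OF assms G.lcs_subgroup] by blast
  ultimately show ?thesis
    unfolding nilq_map_def by simp
qed

lemma (in group_hom) nilq_map_hom: "nilq_map c G H h \<in> hom (nilq c G) (nilq c H)"
proof (rule homI)
  fix C assume "C \<in> carrier (nilq c G)"
  then obtain g where "g \<in> carrier G" "C = lcs G (Suc c) #> g"
    unfolding nilq_carrier by blast
  then show "nilq_map c G H h C \<in> carrier (nilq c H)"
    by (simp add: nilq_map_coset nilq_carrier)
next
  fix C D assume "C \<in> carrier (nilq c G)" "D \<in> carrier (nilq c G)"
  then obtain g k where "g \<in> carrier G" "C = lcs G (Suc c) #> g"
    and "k \<in> carrier G" "D = lcs G (Suc c) #> k"
    unfolding nilq_carrier by blast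
  then show "nilq_map c G H h (C \<otimes>\<^bsub>nilq c G\<^esub> D) =
      nilq_map c G H h C \<otimes>\<^bsub>nilq c H\<^esub> nilq_map c G H h D"
    by (simp add: G.nilq_mult H.nilq_mult nilq_map_coset)
qed

lemma (in group_hom) nilq_map_epi:
  assumes "h ` carrier G = carrier H"
  shows "nilq_map c G H h \<in> epi (nilq c G) (nilq c H)"
proof -
  have "nilq_map c G H h ` carrier (nilq c G) = (\<lambda>g. lcs H (Suc c) #>\<^bsub>H\<^esub> h g) ` carrier G"
    unfolding nilq_carrier image_image by (simp add: nilq_map_coset cong: image_cong)
  also have "\<dots> = carrier (nilq c H)"
    unfolding nilq_carrier assms[symmetric] image_image ..
  finally show ?thesis
    using nilq_map_hom unfolding epi_def by blast
qed

lemma nilq_map_comp: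
  assumes "group_hom G H h" "group_hom H K k" "\<And>x. x \<in> carrier G \<Longrightarrow> g x = k (h x)"
    and "C \<in> carrier (nilq c G)"
  shows "nilq_map c G K g C = nilq_map c H K k (nilq_map c G H h C)"
proof -
  interpret h: group_hom G H h by fact
  interpret k: group_hom H K k by fact
  interpret g: group_hom G K g
    using assms(3) h.G.group_axioms k.H.group_axioms
    by (auto intro!: group_hom.intro group_hom_axioms.intro homI)
  obtain x where "x \<in> carrier G" "C = lcs G (Suc c) #>\<^bsub>G\<^esub> x"
    using assms(4) unfolding nilq_carrier by blast
  then show ?thesis
    by (simp add: h.nilq_map_coset k.nilq_map_coset g.nilq_map_coset assms(3))
qed

lemma nilq_map_image_eq_kernel:
  assumes "group_hom N G j" "group_hom G H q"
    and "q ` carrier G = carrier H" "j ` carrier N = kernel G H q"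
  shows "nilq_map c N G j ` carrier (nilq c N) = kernel (nilq c G) (nilq c H) (nilq_map c G H q)"
proof -
  interpret G: group G using assms(2) group_hom.axioms(1) by blast
  interpret j: group_hom N G j by fact
  interpret q: group_hom G H q by fact
  let ?\<Gamma>G = "lcs G (Suc c)" and ?\<Gamma>H = "lcs H (Suc c)"
  have q_j: "q (j n) = \<one>\<^bsub>H\<^esub>" if "n \<in> carrier N" for n
    using assms(4) that unfolding kernel_def by blast
  have "nilq_map c N G j ` carrier (nilq c N) = (\<lambda>n. ?\<Gamma>G #>\<^bsub>G\<^esub> j n) ` carrier N"
    unfolding nilq_carrier image_image by (simp add: j.nilq_map_coset cong: image_cong)
  also have "\<dots> = kernel (nilq c G) (nilq c H) (nilq_map c G H q)"
  proof (intro equalityI subsetI)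
    fix D assume "D \<in> (\<lambda>n. ?\<Gamma>G #>\<^bsub>G\<^esub> j n) ` carrier N"
    then obtain n where n: "n \<in> carrier N" "D = ?\<Gamma>G #>\<^bsub>G\<^esub> j n" by blast
    then have "nilq_map c G H q D = ?\<Gamma>H"
      using q.H.lcs_subgroup[THEN subgroup.subset] by (simp add: q.nilq_map_coset q_j)
    then show "D \<in> kernel (nilq c G) (nilq c H) (nilq_map c G H q)"
      using n unfolding kernel_def nilq_one nilq_carrier by auto
  next
    fix D assume "D \<in> kernel (nilq c G) (nilq c H) (nilq_map c G H q)"
    then obtain x where x: "x \<in> carrier G" "D = ?\<Gamma>G #>\<^bsub>G\<^esub> x"
      and qx: "?\<Gamma>H #>\<^bsub>H\<^esub> q x = ?\<Gamma>H"
      unfolding kernel_def nilq_one nilq_carrier by (auto simp: q.nilq_map_coset)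
    have "q x \<in> ?\<Gamma>H"
      using q.H.coset_join1[OF qx q.hom_closed[OF x(1)] q.H.lcs_subgroup] .
    \<comment> \<open>Surjectivity of \<open>q\<close> on the lower central series lets us correct \<open>x\<close> into \<open>ker q\<close>.\<close>
    then have "q x \<in> q ` ?\<Gamma>G"
      using q.lcs_img_surj[OF assms(3)] by simp
    then obtain x' where x': "x' \<in> ?\<Gamma>G" "q x' = q x" by (metis imageE)
    then have x'_carrier: "x' \<in> carrier G"
      using G.lcs_subgroup subgroup.subset by blast
    have "inv\<^bsub>G\<^esub> x' \<otimes>\<^bsub>G\<^esub> x \<in> kernel G H q"
      using x(1) x' x'_carrier unfolding kernel_def by simp
    then obtain n where n: "n \<in> carrier N" "j n = inv\<^bsub>G\<^esub> x' \<otimes>\<^bsub>G\<^esub> x"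
      using assms(4) by (metis imageE)
    then have "x = x' \<otimes>\<^bsub>G\<^esub> j n"
      using x(1) x'_carrier by (simp add: G.m_assoc[symmetric])
    then have "x \<in> ?\<Gamma>G #>\<^bsub>G\<^esub> j n"
      using x' n(1) G.lcs_subgroup[THEN subgroup.subset] by (simp add: G.rcosI)
    then have "D = ?\<Gamma>G #>\<^bsub>G\<^esub> j n"
      using x(2) G.repr_independence[OF _ j.hom_closed[OF n(1)] G.lcs_subgroup] by simp
    then show "D \<in> (\<lambda>n. ?\<Gamma>G #>\<^bsub>G\<^esub> j n) ` carrier N"
      using n(1) by blast
  qed
  finally show ?thesis .
qed

lemma short_exact_nilqI:
  assumes "short_exact N G H j q" "inj_on (nilq_map c N G j) (carrier (nilq c N))"
  shows "short_exact (nilq c N) (nilq c G) (nilq c H) (nilq_map c N G j) (nilq_map c G H q)"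
proof -
  have groups: "group N" "group G" "group H"
    and j: "group_hom N G j" and q: "group_hom G H q"
    and q_surj: "q ` carrier G = carrier H" and exact: "j ` carrier N = kernel G H q"
    using assms(1) unfolding short_exact_def mon_def epi_def
    by (auto intro: group_hom.intro group_hom_axioms.intro)
  show ?thesis
    unfolding short_exact_def mon_def
    using groups[THEN group.nilq_group] group_hom.nilq_map_hom[OF j] assms(2)
      group_hom.nilq_map_epi[OF q q_surj] nilq_map_image_eq_kernel[OF j q q_surj exact]
    by blast
qed

lemma pullback_carrier:
  "carrier (pullback E Y p f) = {(e, y). e \<in> carrier E \<and> y \<in> carrier Y \<and> p e = f y}"
  unfolding pullback_def by simp

lemma pullback_mult [simp]:
  "(e, y) \<otimes>\<^bsub>pullback E Y p f\<^esub> (e', y') = (e \<otimes>\<^bsub>E\<^esub> e', y \<otimes>\<^bsub>Y\<^esub> y')"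
  unfolding pullback_def by simp

lemma pullback_group:
  assumes "group_hom E Q p" "group_hom Y Q f"
  shows "group (pullback E Y p f)"
proof -
  interpret p: group_hom E Q p by fact
  interpret f: group_hom Y Q f by fact
  have "subgroup (carrier (pullback E Y p f)) (E \<times>\<times> Y)"
    unfolding pullback_carrier
    by (rule group.subgroupI[OF DirProd_group[OF p.G.group_axioms f.G.group_axioms]])
      (auto intro!: exI[of _ "\<one>\<^bsub>E\<^esub>"] exI[of _ "\<one>\<^bsub>Y\<^esub>"])
  then show ?thesis
    using subgroup.subgroup_is_group DirProd_group[OF p.G.group_axioms f.G.group_axioms]
    unfolding pullback_def by fastforce
qed

lemma short_exact_pullback:
  assumes "short_exact N E Q i p" "group Y" "f \<in> hom Y Q"
  shows "short_exact N (pullback E Y p f) Y (\<lambda>n. (i n, \<one>\<^bsub>Y\<^esub>)) snd"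
proof -
  let ?P = "pullback E Y p f" and ?j = "\<lambda>n. (i n, \<one>\<^bsub>Y\<^esub>)"
  have groups: "group N" "group E" "group Q" and i: "i \<in> mon N E" and p: "p \<in> epi E Q"
    and exact: "i ` carrier N = kernel E Q p"
    using assms(1) unfolding short_exact_def by auto
  interpret i: group_hom N E i using groups i unfolding mon_def
    by (auto intro: group_hom.intro group_hom_axioms.intro)
  interpret p: group_hom E Q p using groups p unfolding epi_def
    by (auto intro: group_hom.intro group_hom_axioms.intro)
  interpret f: group_hom Y Q f using groups assms(2,3)
    by (auto intro: group_hom.intro group_hom_axioms.intro)
  have P: "group ?P"
    by (rule pullback_group) unfold_locales
  have p_i: "p (i n) = \<one>\<^bsub>Q\<^esub>" if "n \<in> carrier N" for n
    using exact that unfolding kernel_def by blast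
  have "?j \<in> hom N ?P"
    using p_i by (intro homI) (auto simp: pullback_carrier)
  then have "?j \<in> mon N ?P"
    using i unfolding mon_def inj_on_def by auto
  moreover have "snd ` carrier ?P = carrier Y"
  proof (intro equalityI subsetI)
    fix y assume y: "y \<in> carrier Y"
    then have "f y \<in> p ` carrier E"
      using p unfolding epi_def by simp
    then obtain e where "e \<in> carrier E" "p e = f y"
      by (metis imageE)
    with y show "y \<in> snd ` carrier ?P"
      by (force simp: pullback_carrier)
  qed (auto simp: pullback_carrier)
  then have "snd \<in> epi ?P Y"
    unfolding epi_def by (auto intro!: homI simp: pullback_carrier)
  moreover have "kernel ?P Y snd = (\<lambda>e. (e, \<one>\<^bsub>Y\<^esub>)) ` kernel E Q p"
    unfolding kernel_def pullback_def by auto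
  ultimately show ?thesis
    unfolding short_exact_def using groups assms(2) P exact[symmetric] by (simp add: image_image)
qed

lemma pullback_fst_hom:
  assumes "group_hom E Q p" "group_hom Y Q f"
  shows "group_hom (pullback E Y p f) E fst"
proof -
  have "fst \<in> hom (pullback E Y p f) E"
    by (intro homI) (auto simp: pullback_carrier)
  then show ?thesis
    using pullback_group[OF assms] assms(1)
    by (simp add: group_hom_def group_hom_axioms_def)
qed

theorem corollary3p7:
  fixes c :: nat
    and N :: "('a, 'm) monoid_scheme" and E :: "('b, 'n) monoid_scheme"
    and Q :: "('c, 'o) monoid_scheme" and Y :: "('d, 'p) monoid_scheme"
    and i :: "'a \<Rightarrow> 'b" and p :: "'b \<Rightarrow> 'c" and f :: "'d \<Rightarrow> 'c"
  assumes "c \<ge> 1"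
    and "short_exact N E Q i p"
    and "short_exact (nilq c N) (nilq c E) (nilq c Q) (nilq_map c N E i) (nilq_map c E Q p)"
    and "group Y" and "f \<in> hom Y Q"
  shows "short_exact (nilq c N) (nilq c (pullback E Y p f)) (nilq c Y)
           (nilq_map c N (pullback E Y p f) (\<lambda>n. (i n, \<one>\<^bsub>Y\<^esub>)))
           (nilq_map c (pullback E Y p f) Y snd)"
proof -
  let ?P = "pullback E Y p f" and ?j = "\<lambda>n. (i n, \<one>\<^bsub>Y\<^esub>)"
  have pullback_exact: "short_exact N ?P Y ?j snd"
    using short_exact_pullback assms(2,4,5) .
  then have j: "group_hom N ?P ?j"
    unfolding short_exact_def mon_def by (simp add: group_hom_def group_hom_axioms_def)
  have fst: "group_hom ?P E fst"
    using assms(2,4,5) unfolding short_exact_def epi_def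
    by (intro pullback_fst_hom[where Q = Q]) (simp_all add: group_hom_def group_hom_axioms_def)
  have "nilq_map c N E i C = (nilq_map c ?P E fst \<circ> nilq_map c N ?P ?j) C"
    if "C \<in> carrier (nilq c N)" for C
    using nilq_map_comp[OF j fst _ that] by simp
  moreover have "inj_on (nilq_map c N E i) (carrier (nilq c N))"
    using assms(3) unfolding short_exact_def mon_def by blast
  ultimately have "inj_on (nilq_map c ?P E fst \<circ> nilq_map c N ?P ?j) (carrier (nilq c N))"
    by (rule inj_on_cong[THEN iffD1])
  then show ?thesis
    by (rule short_exact_nilqI[OF pullback_exact inj_on_imageI2])
qed

end
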